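(* Let $P$ be a power quandle and $G=\mathrm{Gr}(P)$. Then $\mathrm{Gr}(\mathrm{Pq}(G))\cong G\times\mathrm{A}(G)$ as groups, where $\mathrm{A}(G)$ is the kernel of $\epsilon\colon\mathrm{Gr}(\mathrm{Pq}(G))\to G$.
   Context: A power quandle $(P,\rhd,\pi,e)$ consists of a set $P$, a binary operation $\rhd$, an element $e$, and maps $\pi^n\colon P\to P$ ($n\in\mathbb{Z}$) satisfying: each $\lambda_a\colon b\mapsto a\rhd b$ is bijective and $a\rhd(b\rhd c)=(a\rhd b)\rhd(a\rhd c)$; $a\rhd a=a$; $e\rhd b=b$, $a\rhd e=e$; $\pi^1=\mathrm{id}$, $\pi^m\circ\pi^n=\pi^{mn}$; $\pi^0(a)=e$; $a\rhd\pi^n(b)=\pi^n(a\rhd b)$; $\pi^n(a)\rhd b=\lambda_a^n(b)$. For a group $G$, $\mathrm{Pq}(G)$ is the power quandle with $a\rhd b=aba^{-1}$, $\pi^n(a)=a^n$, unit the identity. For a power quandle $P$, $\mathrm{Gr}(P)$ is the group with generators $\sigma(a)$, $a\in P$, and relations $\sigma(a\rhd b)=\sigma(a)\sigma(b)\sigma(a)^{-1}$, $\sigma(\pi^n(a))=\sigma(a)^n$, $\sigma(e)=1$. For a group $G$, $\epsilon\colon\mathrm{Gr}(\mathrm{Pq}(G))\to G$ is the homomorphism with $\epsilon(\sigma(a))=a$. *)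

theory Defs
  imports "HOL-Algebra.Algebra"
begin

definition lam_pow :: "'a set \<Rightarrow> ('a \<Rightarrow> 'a \<Rightarrow> 'a) \<Rightarrow> 'a \<Rightarrow> int \<Rightarrow> 'a \<Rightarrow> 'a" where
  "lam_pow P op a n =
     (if n \<ge> 0 then (op a) ^^ (nat n) else (the_inv_into P (op a)) ^^ (nat (- n)))"

definition power_quandle ::
  "'a set \<Rightarrow> ('a \<Rightarrow> 'a \<Rightarrow> 'a) \<Rightarrow> (int \<Rightarrow> 'a \<Rightarrow> 'a) \<Rightarrow> 'a \<Rightarrow> bool" where
  "power_quandle P op pw e \<longleftrightarrow>
     e \<in> P \<and>
     (\<forall>a\<in>P. \<forall>b\<in>P. op a b \<in> P) \<and>
     (\<forall>n a. a \<in> P \<longrightarrow> pw n a \<in> P) \<and>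
     (\<forall>a\<in>P. bij_betw (op a) P P) \<and>
     (\<forall>a\<in>P. \<forall>b\<in>P. \<forall>c\<in>P. op a (op b c) = op (op a b) (op a c)) \<and>
     (\<forall>a\<in>P. op a a = a) \<and>
     (\<forall>b\<in>P. op e b = b) \<and>
     (\<forall>a\<in>P. op a e = e) \<and>
     (\<forall>a\<in>P. pw 1 a = a) \<and>
     (\<forall>m n. \<forall>a\<in>P. pw m (pw n a) = pw (m * n) a) \<and>
     (\<forall>a\<in>P. pw 0 a = e) \<and>
     (\<forall>n. \<forall>a\<in>P. \<forall>b\<in>P. op a (pw n b) = pw n (op a b)) \<and>
     (\<forall>n. \<forall>a\<in>P. \<forall>b\<in>P. op (pw n a) b = lam_pow P op a n b)"

text \<open>Words: a letter (a, True) stands for sigma(a), (a, False) for sigma(a) inverse.\<close>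
type_synonym 'a word = "('a \<times> bool) list"

definition words :: "'a set \<Rightarrow> 'a word set" where
  "words S = {w. fst ` set w \<subseteq> S}"

definition winv :: "'a word \<Rightarrow> 'a word" where
  "winv w = rev (map (\<lambda>(a, b). (a, \<not> b)) w)"

definition wpow :: "'a word \<Rightarrow> int \<Rightarrow> 'a word" where
  "wpow w n = (if n \<ge> 0 then concat (replicate (nat n) w) else concat (replicate (nat (- n)) (winv w)))"

inductive pres_eq :: "'a set \<Rightarrow> ('a word \<times> 'a word) set \<Rightarrow> 'a word \<Rightarrow> 'a word \<Rightarrow> bool"
  for S R where
  refl: "w \<in> words S \<Longrightarrow> pres_eq S R w w"
| sym: "pres_eq S R x y \<Longrightarrow> pres_eq S R y x"
| trans: "pres_eq S R x y \<Longrightarrow> pres_eq S R y z \<Longrightarrow> pres_eq S R x z"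
| cancel: "a \<in> S \<Longrightarrow> pres_eq S R [(a, b), (a, \<not> b)] []"
| rel: "(x, y) \<in> R \<Longrightarrow> x \<in> words S \<Longrightarrow> y \<in> words S \<Longrightarrow> pres_eq S R x y"
| ctx: "pres_eq S R x y \<Longrightarrow> u \<in> words S \<Longrightarrow> v \<in> words S \<Longrightarrow> pres_eq S R (u @ x @ v) (u @ y @ v)"

definition wclass :: "'a set \<Rightarrow> ('a word \<times> 'a word) set \<Rightarrow> 'a word \<Rightarrow> 'a word set" where
  "wclass S R w = {y. pres_eq S R w y}"

definition pres_mult :: "'a set \<Rightarrow> ('a word \<times> 'a word) set \<Rightarrow> 'a word set \<Rightarrow> 'a word set \<Rightarrow> 'a word set" where
  "pres_mult S R U V = {z. \<exists>x\<in>U. \<exists>y\<in>V. pres_eq S R (x @ y) z}"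

definition presentation :: "'a set \<Rightarrow> ('a word \<times> 'a word) set \<Rightarrow> 'a word set monoid" where
  "presentation S R =
     \<lparr>carrier = wclass S R ` words S,
      monoid.mult = pres_mult S R,
      monoid.one = wclass S R []\<rparr>"

definition Gr_rels :: "'a set \<Rightarrow> ('a \<Rightarrow> 'a \<Rightarrow> 'a) \<Rightarrow> (int \<Rightarrow> 'a \<Rightarrow> 'a) \<Rightarrow> 'a \<Rightarrow> ('a word \<times> 'a word) set" where
  "Gr_rels P op pw e =
     {([(op a b, True)], [(a, True), (b, True), (a, False)]) | a b. a \<in> P \<and> b \<in> P}
     \<union> {([(pw n a, True)], wpow [(a, True)] n) | n a. a \<in> P}
     \<union> {([(e, True)], [])}"

definition Gr :: "'a set \<Rightarrow> ('a \<Rightarrow> 'a \<Rightarrow> 'a) \<Rightarrow> (int \<Rightarrow> 'a \<Rightarrow> 'a) \<Rightarrow> 'a \<Rightarrow> 'a word set monoid" where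
  "Gr P op pw e = presentation P (Gr_rels P op pw e)"

text \<open>Pq(G) has carrier G, a |> b = a b a^-1, pw^n a = a^n, unit 1. Gr_Pq G is Gr(Pq(G)).\<close>
definition Gr_Pq :: "('g, 'm) monoid_scheme \<Rightarrow> 'g word set monoid" where
  "Gr_Pq G = Gr (carrier G) (\<lambda>a b. a \<otimes>\<^bsub>G\<^esub> b \<otimes>\<^bsub>G\<^esub> inv\<^bsub>G\<^esub> a)
                (\<lambda>n a. a [^]\<^bsub>G\<^esub> (n::int)) \<one>\<^bsub>G\<^esub>"

definition word_eval :: "('g, 'm) monoid_scheme \<Rightarrow> 'g word \<Rightarrow> 'g" where
  "word_eval G w = foldr (\<lambda>(a, b) g. (if b then a else inv\<^bsub>G\<^esub> a) \<otimes>\<^bsub>G\<^esub> g) w \<one>\<^bsub>G\<^esub>"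

definition epsilon :: "('g, 'm) monoid_scheme \<Rightarrow> 'g word set \<Rightarrow> 'g" where
  "epsilon G U = word_eval G (SOME w. w \<in> U)"

definition A_grp :: "('g, 'm) monoid_scheme \<Rightarrow> 'g word set monoid" where
  "A_grp G = (Gr_Pq G)\<lparr>carrier := kernel (Gr_Pq G) G (epsilon G)\<rparr>"

end

theory Submission
  imports Defs
begin

text \<open>
  Write \<open>Q = Gr(Pq(G))\<close> with \<open>G = Gr(P)\<close>. First, for every group \<open>G\<close>
  the kernel of \<open>\<epsilon> : Gr(Pq(G)) \<rightarrow> G\<close> is central: conjugating a generator \<open>\<sigma>(h)\<close> by \<open>x\<close>
  gives \<open>\<sigma>(\<epsilon>(x) h \<epsilon>(x)\<inverse>)\<close>, which is \<open>\<sigma>(h)\<close> when \<open>\<epsilon>(x) = 1\<close>. Second, for \<open>G = Gr(P)\<close> the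
  assignment \<open>\<sigma>(a) \<mapsto> \<sigma>(\<sigma>(a))\<close> respects the defining relations and so gives a
  homomorphism \<open>s : G \<rightarrow> Q\<close> with \<open>\<epsilon> \<circ> s = id\<close>. A split extension with central kernel
  is a direct product, via \<open>x \<mapsto> (\<epsilon>(x), x s(\<epsilon>(x))\<inverse>)\<close>.
\<close>

section \<open>Split extensions with central kernel\<close>

lemma (in group) subgroup_commutant:
  assumes z: "z \<in> carrier G"
  shows "subgroup {y \<in> carrier G. z \<otimes> y = y \<otimes> z} G"
proof (rule subgroupI)
  fix a assume "a \<in> {y \<in> carrier G. z \<otimes> y = y \<otimes> z}"
  then have a: "a \<in> carrier G" and za: "z \<otimes> a = a \<otimes> z" by auto
  have "z \<otimes> inv a = inv a \<otimes> (a \<otimes> z) \<otimes> inv a"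
    using a z by (simp add: m_assoc[symmetric])
  also have "\<dots> = inv a \<otimes> z"
    using a z by (simp add: za[symmetric] m_assoc)
  finally show "inv a \<in> {y \<in> carrier G. z \<otimes> y = y \<otimes> z}" using a by simp
next
  fix a b assume "a \<in> {y \<in> carrier G. z \<otimes> y = y \<otimes> z}" "b \<in> {y \<in> carrier G. z \<otimes> y = y \<otimes> z}"
  then show "a \<otimes> b \<in> {y \<in> carrier G. z \<otimes> y = y \<otimes> z}"
    using z by (simp add: m_assoc[symmetric]) (simp add: m_assoc)
qed (use z in auto)

lemma iso_DirProd_kernel_if_central_section:
  assumes Q: "group Q" and G: "group G"
    and eps: "\<epsilon> \<in> hom Q G" and s: "s \<in> hom G Q"
    and eps_s: "\<And>g. g \<in> carrier G \<Longrightarrow> \<epsilon> (s g) = g"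
    and central: "\<And>z y. z \<in> kernel Q G \<epsilon> \<Longrightarrow> y \<in> carrier Q \<Longrightarrow> z \<otimes>\<^bsub>Q\<^esub> y = y \<otimes>\<^bsub>Q\<^esub> z"
  shows "Q \<cong> G \<times>\<times> Q\<lparr>carrier := kernel Q G \<epsilon>\<rparr>"
proof -
  interpret Q: group Q by (rule Q)
  interpret G: group G by (rule G)
  interpret \<epsilon>: group_hom Q G \<epsilon> using eps by (simp add: group_hom_def group_hom_axioms_def)
  interpret s: group_hom G Q s using s by (simp add: group_hom_def group_hom_axioms_def)
  let ?K = "kernel Q G \<epsilon>"
  define k where "k x = x \<otimes>\<^bsub>Q\<^esub> inv\<^bsub>Q\<^esub> s (\<epsilon> x)" for x
  define \<phi> where "\<phi> x = (\<epsilon> x, k x)" for x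
  have k_kernel: "k x \<in> ?K" if "x \<in> carrier Q" for x
    using that eps_s by (simp add: k_def kernel_def)
  have k_mult: "k (x \<otimes>\<^bsub>Q\<^esub> y) = k x \<otimes>\<^bsub>Q\<^esub> k y" if x: "x \<in> carrier Q" and y: "y \<in> carrier Q" for x y
  proof -
    let ?sx = "s (\<epsilon> x)" and ?sy = "s (\<epsilon> y)"
    have "k x \<otimes>\<^bsub>Q\<^esub> k y = x \<otimes>\<^bsub>Q\<^esub> (k y \<otimes>\<^bsub>Q\<^esub> inv\<^bsub>Q\<^esub> ?sx)"
      using central[OF k_kernel[OF y], of "inv\<^bsub>Q\<^esub> ?sx"] x y by (simp add: k_def Q.m_assoc)
    also have "\<dots> = (x \<otimes>\<^bsub>Q\<^esub> y) \<otimes>\<^bsub>Q\<^esub> inv\<^bsub>Q\<^esub> (?sx \<otimes>\<^bsub>Q\<^esub> ?sy)"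
      using x y by (simp add: k_def Q.m_assoc Q.inv_mult_group)
    finally show ?thesis using x y by (simp add: k_def)
  qed
  have "\<phi> \<in> hom Q (G \<times>\<times> Q\<lparr>carrier := ?K\<rparr>)"
    using k_kernel k_mult by (intro homI) (auto simp: \<phi>_def)
  moreover have "bij_betw \<phi> (carrier Q) (carrier (G \<times>\<times> Q\<lparr>carrier := ?K\<rparr>))"
  proof (rule bij_betw_byWitness[where f' = "\<lambda>(g, z). z \<otimes>\<^bsub>Q\<^esub> s g"])
    show "\<forall>x\<in>carrier Q. (\<lambda>(g, z). z \<otimes>\<^bsub>Q\<^esub> s g) (\<phi> x) = x"
      by (simp add: \<phi>_def k_def Q.m_assoc)
    show "\<forall>p\<in>carrier (G \<times>\<times> Q\<lparr>carrier := ?K\<rparr>). \<phi> ((\<lambda>(g, z). z \<otimes>\<^bsub>Q\<^esub> s g) p) = p"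
      using eps_s by (auto simp: \<phi>_def k_def kernel_def Q.m_assoc)
    show "\<phi> ` carrier Q \<subseteq> carrier (G \<times>\<times> Q\<lparr>carrier := ?K\<rparr>)"
      using k_kernel by (auto simp: \<phi>_def)
    show "(\<lambda>(g, z). z \<otimes>\<^bsub>Q\<^esub> s g) ` carrier (G \<times>\<times> Q\<lparr>carrier := ?K\<rparr>) \<subseteq> carrier Q"
      by (auto simp: kernel_def)
  qed
  ultimately show ?thesis by (auto simp: is_iso_def iso_def)
qed

lemma words_Nil [simp]: "[] \<in> words S"
  by (simp add: words_def)

lemma words_Cons [simp]: "x # w \<in> words S \<longleftrightarrow> fst x \<in> S \<and> w \<in> words S"
  by (auto simp: words_def)

lemma words_append [simp]: "u @ v \<in> words S \<longleftrightarrow> u \<in> words S \<and> v \<in> words S"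
  by (auto simp: words_def)

lemma winv_Nil [simp]: "winv [] = []"
  by (simp add: winv_def)

lemma winv_Cons [simp]: "winv (x # w) = winv w @ [(fst x, \<not> snd x)]"
  by (cases x) (simp add: winv_def)

lemma winv_append [simp]: "winv (u @ v) = winv v @ winv u"
  by (simp add: winv_def)

lemma winv_winv [simp]: "winv (winv w) = w"
  by (induction w) auto

lemma words_winv [simp]: "winv w \<in> words S \<longleftrightarrow> w \<in> words S"
  by (induction w) auto

lemma words_concat_replicate: "w \<in> words S \<Longrightarrow> concat (replicate k w) \<in> words S"
  by (induction k) auto

lemma words_wpow: "w \<in> words S \<Longrightarrow> wpow w n \<in> words S"
  by (simp add: wpow_def words_concat_replicate)

abbreviation gen :: "'a set \<Rightarrow> ('a word \<times> 'a word) set \<Rightarrow> 'a \<Rightarrow> 'a word set" where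
  "gen S R a \<equiv> wclass S R [(a, True)]"

lemma pres_eq_words: "pres_eq S R u v \<Longrightarrow> u \<in> words S \<and> v \<in> words S"
  by (induction rule: pres_eq.induct) auto

lemma pres_eq_append:
  assumes "pres_eq S R u u'" and "pres_eq S R v v'"
  shows "pres_eq S R (u @ v) (u' @ v')"
proof -
  have words: "u \<in> words S" "u' \<in> words S" "v \<in> words S" "v' \<in> words S"
    using assms pres_eq_words by blast+
  have "pres_eq S R ([] @ u @ v) ([] @ u' @ v)"
    using assms(1) words by (intro pres_eq.ctx) auto
  moreover have "pres_eq S R (u' @ v @ []) (u' @ v' @ [])"
    using assms(2) words by (intro pres_eq.ctx) auto
  ultimately show ?thesis by (auto intro: pres_eq.trans)
qed

lemma pres_eq_append_winv: "w \<in> words S \<Longrightarrow> pres_eq S R (w @ winv w) []"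
proof (induction w)
  case Nil
  then show ?case by (simp add: pres_eq.refl)
next
  case (Cons x w)
  obtain a b where x: "x = (a, b)" by (cases x)
  have "pres_eq S R ([(a, b)] @ (w @ winv w) @ [(a, \<not> b)]) ([(a, b)] @ [] @ [(a, \<not> b)])"
    using Cons x by (intro pres_eq.ctx) auto
  moreover have "pres_eq S R [(a, b), (a, \<not> b)] []"
    using Cons x by (simp add: pres_eq.cancel)
  ultimately show ?case using x by (auto intro: pres_eq.trans)
qed

lemma wclass_eq_iff:
  assumes "u \<in> words S" and "v \<in> words S"
  shows "wclass S R u = wclass S R v \<longleftrightarrow> pres_eq S R u v"
  using assms by (auto simp: wclass_def intro: pres_eq.refl pres_eq.trans pres_eq.sym)

lemma pres_mult_wclass:
  assumes "u \<in> words S" and "v \<in> words S"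
  shows "pres_mult S R (wclass S R u) (wclass S R v) = wclass S R (u @ v)"
  using assms
  by (auto simp: pres_mult_def wclass_def intro: pres_eq.trans pres_eq_append intro!: pres_eq.refl)

lemma carrier_presentation: "carrier (presentation S R) = wclass S R ` words S"
  by (simp add: presentation_def)

lemma mult_presentation:
  "u \<in> words S \<Longrightarrow> v \<in> words S \<Longrightarrow>
    wclass S R u \<otimes>\<^bsub>presentation S R\<^esub> wclass S R v = wclass S R (u @ v)"
  by (simp add: presentation_def pres_mult_wclass)

lemma one_presentation: "\<one>\<^bsub>presentation S R\<^esub> = wclass S R []"
  by (simp add: presentation_def)

lemma gen_in_carrier: "a \<in> S \<Longrightarrow> gen S R a \<in> carrier (presentation S R)"
  by (simp add: carrier_presentation)

lemma group_presentation: "group (presentation S R)"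
proof (rule groupI)
  fix x
  assume "x \<in> carrier (presentation S R)"
  then obtain w where w: "w \<in> words S" "x = wclass S R w"
    by (auto simp: carrier_presentation)
  show "\<exists>y\<in>carrier (presentation S R). y \<otimes>\<^bsub>presentation S R\<^esub> x = \<one>\<^bsub>presentation S R\<^esub>"
  proof
    show "wclass S R (winv w) \<otimes>\<^bsub>presentation S R\<^esub> x = \<one>\<^bsub>presentation S R\<^esub>"
      using w pres_eq_append_winv[of "winv w" S R]
      by (simp add: mult_presentation one_presentation wclass_eq_iff)
  qed (use w in \<open>simp add: carrier_presentation\<close>)
qed (auto simp: carrier_presentation mult_presentation one_presentation)

lemma inv_presentation:
  "w \<in> words S \<Longrightarrow> inv\<^bsub>presentation S R\<^esub> (wclass S R w) = wclass S R (winv w)"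
  using pres_eq_append_winv[of "winv w" S R]
  by (intro group.inv_equality[OF group_presentation])
    (auto simp: carrier_presentation mult_presentation one_presentation wclass_eq_iff)

lemma wclass_rel:
  "(u, v) \<in> R \<Longrightarrow> u \<in> words S \<Longrightarrow> v \<in> words S \<Longrightarrow> wclass S R u = wclass S R v"
  by (simp add: wclass_eq_iff pres_eq.rel)

definition weval :: "('g, 'm) monoid_scheme \<Rightarrow> ('a \<Rightarrow> 'g) \<Rightarrow> 'a word \<Rightarrow> 'g" where
  "weval H f w = foldr (\<lambda>(a, b) g. (if b then f a else inv\<^bsub>H\<^esub> (f a)) \<otimes>\<^bsub>H\<^esub> g) w \<one>\<^bsub>H\<^esub>"

lemma weval_Nil [simp]: "weval H f [] = \<one>\<^bsub>H\<^esub>"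
  by (simp add: weval_def)

lemma weval_Cons [simp]:
  "weval H f ((a, b) # w) = (if b then f a else inv\<^bsub>H\<^esub> (f a)) \<otimes>\<^bsub>H\<^esub> weval H f w"
  by (simp add: weval_def)

lemma word_eval_eq_weval: "word_eval G w = weval G id w"
  by (induction w) (auto simp: word_eval_def weval_def)

lemma weval_cong: "w \<in> words S \<Longrightarrow> (\<And>a. a \<in> S \<Longrightarrow> f a = g a) \<Longrightarrow> weval H f w = weval H g w"
  by (induction w) auto

context group
begin

lemma weval_closed: "f ` S \<subseteq> carrier G \<Longrightarrow> w \<in> words S \<Longrightarrow> weval G f w \<in> carrier G"
  by (induction w) auto

lemma weval_in_subgroup:
  "subgroup K G \<Longrightarrow> f ` S \<subseteq> K \<Longrightarrow> w \<in> words S \<Longrightarrow> weval G f w \<in> K"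
  by (induction w) (auto simp: subgroup.m_closed subgroup.m_inv_closed subgroup.one_closed)

lemma weval_append:
  "f ` S \<subseteq> carrier G \<Longrightarrow> u \<in> words S \<Longrightarrow> v \<in> words S \<Longrightarrow>
    weval G f (u @ v) = weval G f u \<otimes> weval G f v"
  by (induction u) (auto simp: m_assoc weval_closed image_subset_iff)

lemma weval_winv:
  assumes f: "f ` S \<subseteq> carrier G"
  shows "w \<in> words S \<Longrightarrow> weval G f (winv w) = inv (weval G f w)"
proof (induction w)
  case (Cons x w)
  obtain a b where x: "x = (a, b)" by (cases x)
  have "f a \<in> carrier G" "weval G f w \<in> carrier G"
    using Cons x f weval_closed by auto
  then show ?case
    using Cons x f by (cases b) (simp_all add: weval_append weval_closed inv_mult_group)
qed simp

lemma weval_concat_replicate: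
  "f ` S \<subseteq> carrier G \<Longrightarrow> w \<in> words S \<Longrightarrow>
    weval G f (concat (replicate k w)) = weval G f w [^] k"
proof (induction k)
  case (Suc k)
  then show ?case
    using nat_pow_Suc2[OF weval_closed, of f S w k] by (simp add: weval_append words_concat_replicate)
qed simp

lemma weval_wpow:
  assumes f: "f ` S \<subseteq> carrier G" and w: "w \<in> words S"
  shows "weval G f (wpow w n) = weval G f w [^] n"
proof -
  have "weval G f w \<in> carrier G" using f w by (rule weval_closed)
  then show ?thesis
    unfolding wpow_def int_pow_def2[of _ _ n]
    by (simp add: weval_concat_replicate[OF f] weval_winv[OF f w] nat_pow_inv int_pow_inv w)
qed

lemma weval_pres_eq:
  assumes f: "f ` S \<subseteq> carrier G"
    and R: "\<And>u v. (u, v) \<in> R \<Longrightarrow> u \<in> words S \<Longrightarrow> v \<in> words S \<Longrightarrow> weval G f u = weval G f v"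
  shows "pres_eq S R u v \<Longrightarrow> weval G f u = weval G f v"
proof (induction rule: pres_eq.induct)
  case (cancel a b)
  then show ?case using f by (cases b) auto
next
  case (ctx u v x y)
  then show ?case using pres_eq_words[OF ctx.hyps(1)] by (simp add: weval_append[OF f])
qed (use R in auto)

end

lemma hom_weval:
  assumes G: "group G" and H: "group H" and h: "h \<in> hom G H" and f: "f ` S \<subseteq> carrier G"
    and w: "w \<in> words S"
  shows "h (weval G f w) = weval H (h \<circ> f) w"
  using w
proof (induction w)
  interpret h: group_hom G H h
    using G H h by (simp add: group_hom_def group_hom_axioms_def)
  case (Cons x w)
  obtain a b where x: "x = (a, b)" by (cases x)
  then have "f a \<in> carrier G" "weval G f w \<in> carrier G"
    using Cons f group.weval_closed[OF G f] by auto
  then show ?case using Cons x by (cases b) simp_all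
next
  case Nil
  then show ?case using G H h by (simp add: hom_one)
qed

lemma weval_gen: "w \<in> words S \<Longrightarrow> weval (presentation S R) (gen S R) w = wclass S R w"
proof (induction w)
  case (Cons x w)
  obtain a b where x: "x = (a, b)" by (cases x)
  with Cons have "a \<in> S" by simp
  then have "(if b then gen S R a else inv\<^bsub>presentation S R\<^esub> gen S R a) = wclass S R [(a, b)]"
    by (cases b) (auto simp: inv_presentation winv_def)
  then show ?case using Cons x \<open>a \<in> S\<close> mult_presentation[of "[(a, b)]" S w R] by simp
qed (simp add: one_presentation)

section \<open>The universal property of a presentation\<close>

definition pres_lift :: "('g, 'm) monoid_scheme \<Rightarrow> ('a \<Rightarrow> 'g) \<Rightarrow> 'a word set \<Rightarrow> 'g" where
  "pres_lift H f U = weval H f (SOME w. w \<in> U)"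

context group
begin

lemma pres_lift_wclass:
  assumes f: "f ` S \<subseteq> carrier G"
    and R: "\<And>u v. (u, v) \<in> R \<Longrightarrow> u \<in> words S \<Longrightarrow> v \<in> words S \<Longrightarrow> weval G f u = weval G f v"
    and w: "w \<in> words S"
  shows "pres_lift G f (wclass S R w) = weval G f w"
proof -
  have "w \<in> wclass S R w" using w by (simp add: wclass_def pres_eq.refl)
  then have "pres_eq S R w (SOME v. v \<in> wclass S R w)"
    by (metis (mono_tags) someI mem_Collect_eq wclass_def)
  then show ?thesis by (simp add: pres_lift_def weval_pres_eq[OF f R])
qed

lemma pres_lift_hom:
  assumes f: "f ` S \<subseteq> carrier G"
    and R: "\<And>u v. (u, v) \<in> R \<Longrightarrow> u \<in> words S \<Longrightarrow> v \<in> words S \<Longrightarrow> weval G f u = weval G f v"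
  shows "pres_lift G f \<in> hom (presentation S R) G"
  by (rule homI)
    (auto simp: carrier_presentation mult_presentation pres_lift_wclass[OF f R]
      weval_closed[OF f] weval_append[OF f])

end

lemma Gr_rels_cases:
  assumes "(u, v) \<in> Gr_rels P op pw e"
  obtains a b where "a \<in> P" "b \<in> P" "u = [(op a b, True)]" "v = [(a, True), (b, True), (a, False)]"
    | n a where "a \<in> P" "u = [(pw n a, True)]" "v = wpow [(a, True)] n"
    | "u = [(e, True)]" "v = []"
  using assms unfolding Gr_rels_def by blast

lemma weval_Gr_rels:
  assumes H: "group H" and f: "f ` P \<subseteq> carrier H"
    and op: "\<And>a b. a \<in> P \<Longrightarrow> b \<in> P \<Longrightarrow> op a b \<in> P \<Longrightarrow>
      f (op a b) = f a \<otimes>\<^bsub>H\<^esub> f b \<otimes>\<^bsub>H\<^esub> inv\<^bsub>H\<^esub> f a"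
    and pw: "\<And>n a. a \<in> P \<Longrightarrow> pw n a \<in> P \<Longrightarrow> f (pw n a) = f a [^]\<^bsub>H\<^esub> n"
    and e: "e \<in> P \<Longrightarrow> f e = \<one>\<^bsub>H\<^esub>"
    and rel: "(u, v) \<in> Gr_rels P op pw e" and u: "u \<in> words P" and "v \<in> words P"
  shows "weval H f u = weval H f v"
proof -
  interpret H: group H by (rule H)
  from rel show ?thesis
  proof (cases rule: Gr_rels_cases)
    case (1 a b)
    then show ?thesis using u f op by (simp add: H.m_assoc image_subset_iff)
  next
    case (2 n a)
    then show ?thesis using u f pw H.weval_wpow[OF f, of "[(a, True)]"] by auto
  qed (use u e in simp)
qed

lemma Gr_lift_hom:
  assumes "group H" "f ` P \<subseteq> carrier H"
    and "\<And>a b. a \<in> P \<Longrightarrow> b \<in> P \<Longrightarrow> op a b \<in> P \<Longrightarrow>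
      f (op a b) = f a \<otimes>\<^bsub>H\<^esub> f b \<otimes>\<^bsub>H\<^esub> inv\<^bsub>H\<^esub> f a"
    and "\<And>n a. a \<in> P \<Longrightarrow> pw n a \<in> P \<Longrightarrow> f (pw n a) = f a [^]\<^bsub>H\<^esub> n"
    and "e \<in> P \<Longrightarrow> f e = \<one>\<^bsub>H\<^esub>"
  shows "pres_lift H f \<in> hom (Gr P op pw e) H"
  unfolding Gr_def using assms weval_Gr_rels[OF assms]
  by (intro group.pres_lift_hom) blast+

lemma Gr_lift_wclass:
  assumes "group H" "f ` P \<subseteq> carrier H"
    and "\<And>a b. a \<in> P \<Longrightarrow> b \<in> P \<Longrightarrow> op a b \<in> P \<Longrightarrow>
      f (op a b) = f a \<otimes>\<^bsub>H\<^esub> f b \<otimes>\<^bsub>H\<^esub> inv\<^bsub>H\<^esub> f a"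
    and "\<And>n a. a \<in> P \<Longrightarrow> pw n a \<in> P \<Longrightarrow> f (pw n a) = f a [^]\<^bsub>H\<^esub> n"
    and "e \<in> P \<Longrightarrow> f e = \<one>\<^bsub>H\<^esub>"
    and "w \<in> words P"
  shows "pres_lift H f (wclass P (Gr_rels P op pw e) w) = weval H f w"
  using assms weval_Gr_rels[OF assms(1-5)]
  by (intro group.pres_lift_wclass) blast+

context
  fixes P :: "'a set" and op :: "'a \<Rightarrow> 'a \<Rightarrow> 'a" and pw :: "int \<Rightarrow> 'a \<Rightarrow> 'a" and e :: 'a
begin

abbreviation \<sigma> :: "'a \<Rightarrow> 'a word set" where
  "\<sigma> \<equiv> gen P (Gr_rels P op pw e)"

lemma group_Gr: "group (Gr P op pw e)"
  by (simp add: Gr_def group_presentation)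

lemma Gr_gen_in_carrier: "a \<in> P \<Longrightarrow> \<sigma> a \<in> carrier (Gr P op pw e)"
  by (simp add: Gr_def gen_in_carrier)

lemma weval_Gr_gen: "w \<in> words P \<Longrightarrow> weval (Gr P op pw e) \<sigma> w = wclass P (Gr_rels P op pw e) w"
  by (simp add: Gr_def weval_gen)

lemma Gr_gen_op:
  assumes "a \<in> P" "b \<in> P" "op a b \<in> P"
  shows "\<sigma> (op a b) = \<sigma> a \<otimes>\<^bsub>Gr P op pw e\<^esub> \<sigma> b \<otimes>\<^bsub>Gr P op pw e\<^esub> inv\<^bsub>Gr P op pw e\<^esub> \<sigma> a"
proof -
  interpret Gr: group "Gr P op pw e" by (rule group_Gr)
  let ?w = "[(a, True), (b, True), (a, False)]"
  have "\<sigma> (op a b) = wclass P (Gr_rels P op pw e) ?w"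
    using assms by (intro wclass_rel) (auto simp: Gr_rels_def)
  also have "\<dots> = weval (Gr P op pw e) \<sigma> ?w"
    by (rule weval_Gr_gen[symmetric]) (use assms in simp)
  finally show ?thesis
    using assms Gr_gen_in_carrier by (simp add: Gr.m_assoc)
qed

lemma Gr_gen_pw:
  assumes "a \<in> P" "pw n a \<in> P"
  shows "\<sigma> (pw n a) = \<sigma> a [^]\<^bsub>Gr P op pw e\<^esub> n"
proof -
  interpret Gr: group "Gr P op pw e" by (rule group_Gr)
  have a: "[(a, True)] \<in> words P" using assms by simp
  have "\<sigma> (pw n a) = wclass P (Gr_rels P op pw e) (wpow [(a, True)] n)"
    using assms words_wpow[OF a] by (intro wclass_rel) (auto simp: Gr_rels_def)
  also have "\<dots> = weval (Gr P op pw e) \<sigma> (wpow [(a, True)] n)"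
    using words_wpow[OF a] by (simp add: weval_Gr_gen)
  also have "\<dots> = weval (Gr P op pw e) \<sigma> [(a, True)] [^]\<^bsub>Gr P op pw e\<^esub> n"
    using Gr_gen_in_carrier by (intro Gr.weval_wpow[OF _ a]) blast
  finally show ?thesis
    using assms Gr_gen_in_carrier by simp
qed

lemma Gr_gen_e: "e \<in> P \<Longrightarrow> \<sigma> e = \<one>\<^bsub>Gr P op pw e\<^esub>"
  using wclass_rel[of "[(e, True)]" "[]" "Gr_rels P op pw e" P]
  by (simp add: Gr_rels_def Gr_def one_presentation)

end

section \<open>The kernel of \<open>\<epsilon>\<close> is central\<close>

abbreviation Pq_rels :: "('g, 'm) monoid_scheme \<Rightarrow> ('g word \<times> 'g word) set" where
  "Pq_rels G \<equiv> Gr_rels (carrier G) (\<lambda>a b. a \<otimes>\<^bsub>G\<^esub> b \<otimes>\<^bsub>G\<^esub> inv\<^bsub>G\<^esub> a) (\<lambda>n a. a [^]\<^bsub>G\<^esub> (n::int)) \<one>\<^bsub>G\<^esub>"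

abbreviation Pq_gen :: "('g, 'm) monoid_scheme \<Rightarrow> 'g \<Rightarrow> 'g word set" where
  "Pq_gen G \<equiv> gen (carrier G) (Pq_rels G)"

context group
begin

lemma Gr_Pq_eq_presentation: "Gr_Pq G = presentation (carrier G) (Pq_rels G)"
  by (simp add: Gr_Pq_def Gr_def)

lemma group_Gr_Pq: "group (Gr_Pq G)"
  by (simp add: Gr_Pq_def group_Gr)

lemma Pq_gen_in_carrier: "a \<in> carrier G \<Longrightarrow> Pq_gen G a \<in> carrier (Gr_Pq G)"
  by (simp add: Gr_Pq_eq_presentation gen_in_carrier)

lemma Pq_gen_conj:
  "a \<in> carrier G \<Longrightarrow> b \<in> carrier G \<Longrightarrow>
    Pq_gen G (a \<otimes> b \<otimes> inv a) = Pq_gen G a \<otimes>\<^bsub>Gr_Pq G\<^esub> Pq_gen G b \<otimes>\<^bsub>Gr_Pq G\<^esub> inv\<^bsub>Gr_Pq G\<^esub> Pq_gen G a"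
  unfolding Gr_Pq_def by (rule Gr_gen_op) simp_all

lemma Pq_gen_pow: "a \<in> carrier G \<Longrightarrow> Pq_gen G (a [^] (n::int)) = Pq_gen G a [^]\<^bsub>Gr_Pq G\<^esub> n"
  unfolding Gr_Pq_def by (rule Gr_gen_pw) simp_all

lemma Pq_gen_inv: "a \<in> carrier G \<Longrightarrow> Pq_gen G (inv a) = inv\<^bsub>Gr_Pq G\<^esub> Pq_gen G a"
  using Pq_gen_pow[of a "-1"] Pq_gen_in_carrier[of a]
    group.int_pow_neg[OF group_Gr_Pq] group.int_pow_1[OF group_Gr_Pq]
  by (simp add: int_pow_neg)

lemma Pq_gen_one: "Pq_gen G \<one> = \<one>\<^bsub>Gr_Pq G\<^esub>"
  unfolding Gr_Pq_def by (rule Gr_gen_e) simp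

lemma epsilon_eq_pres_lift: "epsilon G = pres_lift G id"
  by (simp add: fun_eq_iff epsilon_def pres_lift_def word_eval_eq_weval)

lemma epsilon_hom: "epsilon G \<in> hom (Gr_Pq G) G"
  unfolding epsilon_eq_pres_lift Gr_Pq_def
  by (rule Gr_lift_hom) (simp_all add: is_group)

lemma epsilon_wclass: "w \<in> words (carrier G) \<Longrightarrow> epsilon G (wclass (carrier G) (Pq_rels G) w) = weval G id w"
  unfolding epsilon_eq_pres_lift
  by (rule Gr_lift_wclass) (simp_all add: is_group)

lemma epsilon_Pq_gen: "a \<in> carrier G \<Longrightarrow> epsilon G (Pq_gen G a) = a"
  by (simp add: epsilon_wclass)

lemma conj_Pq_gen:
  assumes x: "x \<in> carrier (Gr_Pq G)" and h: "h \<in> carrier G"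
  shows "x \<otimes>\<^bsub>Gr_Pq G\<^esub> Pq_gen G h \<otimes>\<^bsub>Gr_Pq G\<^esub> inv\<^bsub>Gr_Pq G\<^esub> x
    = Pq_gen G (epsilon G x \<otimes> h \<otimes> inv (epsilon G x))"
proof -
  interpret Q: group "Gr_Pq G" by (rule group_Gr_Pq)
  let ?Q = "Gr_Pq G" and ?cl = "wclass (carrier G) (Pq_rels G)" and ?ev = "weval G id"
  from x obtain w where w: "w \<in> words (carrier G)" and x_eq: "x = ?cl w"
    by (auto simp: Gr_Pq_eq_presentation carrier_presentation)
  have "?cl w \<otimes>\<^bsub>?Q\<^esub> Pq_gen G h \<otimes>\<^bsub>?Q\<^esub> inv\<^bsub>?Q\<^esub> ?cl w = Pq_gen G (?ev w \<otimes> h \<otimes> inv (?ev w))"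
    using w
  proof (induction w)
    case Nil
    have "?cl [] = \<one>\<^bsub>?Q\<^esub>" by (simp add: Gr_Pq_eq_presentation one_presentation)
    then show ?case using h Pq_gen_in_carrier by simp
  next
    case (Cons y w)
    obtain a b where y: "y = (a, b)" by (cases y)
    define c where "c = (if b then a else inv a)"
    have a: "a \<in> carrier G" and c: "c \<in> carrier G" and w: "w \<in> words (carrier G)"
      using Cons y by (auto simp: c_def)
    have ev: "?ev (y # w) = c \<otimes> ?ev w" using y by (simp add: c_def)
    have W: "?cl w \<in> carrier ?Q" using w by (simp add: Gr_Pq_eq_presentation carrier_presentation)
    have ev_w: "?ev w \<in> carrier G" using weval_closed[of id "carrier G" w] w by simp
    have "?cl [(a, b)] = Pq_gen G c"
      using a Pq_gen_inv[OF a] by (cases b) (simp_all add: c_def Gr_Pq_eq_presentation inv_presentation winv_def)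
    then have cl_Cons: "?cl (y # w) = Pq_gen G c \<otimes>\<^bsub>?Q\<^esub> ?cl w"
      using mult_presentation[of "[(a, b)]" "carrier G" w "Pq_rels G"] a w y
      by (simp add: Gr_Pq_eq_presentation)
    have "?cl (y # w) \<otimes>\<^bsub>?Q\<^esub> Pq_gen G h \<otimes>\<^bsub>?Q\<^esub> inv\<^bsub>?Q\<^esub> ?cl (y # w)
      = Pq_gen G c \<otimes>\<^bsub>?Q\<^esub> (?cl w \<otimes>\<^bsub>?Q\<^esub> Pq_gen G h \<otimes>\<^bsub>?Q\<^esub> inv\<^bsub>?Q\<^esub> ?cl w) \<otimes>\<^bsub>?Q\<^esub> inv\<^bsub>?Q\<^esub> Pq_gen G c"
      unfolding cl_Cons using W Pq_gen_in_carrier[OF c] Pq_gen_in_carrier[OF h]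
      by (simp add: Q.m_assoc Q.inv_mult_group)
    also have "\<dots> = Pq_gen G c \<otimes>\<^bsub>?Q\<^esub> Pq_gen G (?ev w \<otimes> h \<otimes> inv (?ev w)) \<otimes>\<^bsub>?Q\<^esub> inv\<^bsub>?Q\<^esub> Pq_gen G c"
      by (simp only: Cons.IH[OF w])
    also have "\<dots> = Pq_gen G (c \<otimes> (?ev w \<otimes> h \<otimes> inv (?ev w)) \<otimes> inv c)"
      using c ev_w h by (simp add: Pq_gen_conj)
    also have "\<dots> = Pq_gen G (?ev (y # w) \<otimes> h \<otimes> inv (?ev (y # w)))"
      using c ev_w h ev by (simp add: m_assoc inv_mult_group)
    finally show ?case .
  qed
  then show ?thesis using x_eq w by (simp add: epsilon_wclass)
qed

lemma kernel_epsilon_central: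
  assumes z: "z \<in> kernel (Gr_Pq G) G (epsilon G)" and y: "y \<in> carrier (Gr_Pq G)"
  shows "z \<otimes>\<^bsub>Gr_Pq G\<^esub> y = y \<otimes>\<^bsub>Gr_Pq G\<^esub> z"
proof -
  interpret Q: group "Gr_Pq G" by (rule group_Gr_Pq)
  let ?C = "{y \<in> carrier (Gr_Pq G). z \<otimes>\<^bsub>Gr_Pq G\<^esub> y = y \<otimes>\<^bsub>Gr_Pq G\<^esub> z}"
  have zc: "z \<in> carrier (Gr_Pq G)" using z by (simp add: kernel_def)
  have "Pq_gen G ` carrier G \<subseteq> ?C"
  proof (rule image_subsetI)
    fix h assume h: "h \<in> carrier G"
    have "Pq_gen G h = z \<otimes>\<^bsub>Gr_Pq G\<^esub> Pq_gen G h \<otimes>\<^bsub>Gr_Pq G\<^esub> inv\<^bsub>Gr_Pq G\<^esub> z"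
      using conj_Pq_gen[OF zc h] z h by (simp add: kernel_def)
    then have "z \<otimes>\<^bsub>Gr_Pq G\<^esub> Pq_gen G h = Pq_gen G h \<otimes>\<^bsub>Gr_Pq G\<^esub> z"
      using Q.inv_solve_right[of "Pq_gen G h" "z \<otimes>\<^bsub>Gr_Pq G\<^esub> Pq_gen G h" z] zc Pq_gen_in_carrier[OF h]
      by simp
    then show "Pq_gen G h \<in> ?C" using Pq_gen_in_carrier[OF h] by simp
  qed
  moreover obtain w where w: "w \<in> words (carrier G)" and "y = wclass (carrier G) (Pq_rels G) w"
    using y by (auto simp: Gr_Pq_eq_presentation carrier_presentation)
  then have "y = weval (Gr_Pq G) (Pq_gen G) w" by (simp add: Gr_Pq_eq_presentation weval_gen)
  ultimately have "y \<in> ?C" using Q.weval_in_subgroup[OF Q.subgroup_commutant[OF zc] _ w] by simp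
  then show ?thesis by simp
qed

end

section \<open>A section of \<open>\<epsilon>\<close> over \<open>Gr(P)\<close>\<close>

context
  fixes P :: "'a set" and op :: "'a \<Rightarrow> 'a \<Rightarrow> 'a" and pw :: "int \<Rightarrow> 'a \<Rightarrow> 'a" and e :: 'a
begin

abbreviation \<tau> :: "'a \<Rightarrow> 'a word set word set" where
  "\<tau> a \<equiv> Pq_gen (Gr P op pw e) (\<sigma> P op pw e a)"

lemma Gr_gen_Pq_gen_relations:
  shows "\<tau> ` P \<subseteq> carrier (Gr_Pq (Gr P op pw e))"
    and "\<And>a b. a \<in> P \<Longrightarrow> b \<in> P \<Longrightarrow> op a b \<in> P \<Longrightarrow>
      \<tau> (op a b) = \<tau> a \<otimes>\<^bsub>Gr_Pq (Gr P op pw e)\<^esub> \<tau> b \<otimes>\<^bsub>Gr_Pq (Gr P op pw e)\<^esub> inv\<^bsub>Gr_Pq (Gr P op pw e)\<^esub> \<tau> a"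
    and "\<And>n a. a \<in> P \<Longrightarrow> pw n a \<in> P \<Longrightarrow> \<tau> (pw n a) = \<tau> a [^]\<^bsub>Gr_Pq (Gr P op pw e)\<^esub> n"
    and "e \<in> P \<Longrightarrow> \<tau> e = \<one>\<^bsub>Gr_Pq (Gr P op pw e)\<^esub>"
proof -
  interpret Gr: group "Gr P op pw e" by (rule group_Gr)
  show "\<tau> ` P \<subseteq> carrier (Gr_Pq (Gr P op pw e))"
    by (auto intro: Gr.Pq_gen_in_carrier Gr_gen_in_carrier)
  show "\<tau> (op a b) = \<tau> a \<otimes>\<^bsub>Gr_Pq (Gr P op pw e)\<^esub> \<tau> b \<otimes>\<^bsub>Gr_Pq (Gr P op pw e)\<^esub> inv\<^bsub>Gr_Pq (Gr P op pw e)\<^esub> \<tau> a"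
    if "a \<in> P" "b \<in> P" "op a b \<in> P" for a b
    using that by (simp add: Gr_gen_op Gr.Pq_gen_conj Gr_gen_in_carrier)
  show "\<tau> (pw n a) = \<tau> a [^]\<^bsub>Gr_Pq (Gr P op pw e)\<^esub> n" if "a \<in> P" "pw n a \<in> P" for n a
    using that by (simp add: Gr_gen_pw Gr.Pq_gen_pow Gr_gen_in_carrier)
  show "e \<in> P \<Longrightarrow> \<tau> e = \<one>\<^bsub>Gr_Pq (Gr P op pw e)\<^esub>"
    by (simp add: Gr_gen_e Gr.Pq_gen_one)
qed

definition Gr_section :: "'a word set \<Rightarrow> 'a word set word set" where
  "Gr_section = pres_lift (Gr_Pq (Gr P op pw e)) \<tau>"

lemma Gr_section_hom: "Gr_section \<in> hom (Gr P op pw e) (Gr_Pq (Gr P op pw e))"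
proof -
  interpret Gr: group "Gr P op pw e" by (rule group_Gr)
  show ?thesis
    unfolding Gr_section_def
    using Gr.group_Gr_Pq Gr_gen_Pq_gen_relations by (rule Gr_lift_hom)
qed

lemma epsilon_Gr_section:
  assumes x: "x \<in> carrier (Gr P op pw e)"
  shows "epsilon (Gr P op pw e) (Gr_section x) = x"
proof -
  interpret Gr: group "Gr P op pw e" by (rule group_Gr)
  from x obtain w where w: "w \<in> words P" and x_eq: "x = wclass P (Gr_rels P op pw e) w"
    by (auto simp: Gr_def carrier_presentation)
  have "Gr_section x = weval (Gr_Pq (Gr P op pw e)) \<tau> w"
    unfolding Gr_section_def x_eq
    using Gr.group_Gr_Pq Gr_gen_Pq_gen_relations w by (rule Gr_lift_wclass)
  then have "epsilon (Gr P op pw e) (Gr_section x) = weval (Gr P op pw e) (epsilon (Gr P op pw e) \<circ> \<tau>) w"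
    by (simp only: hom_weval[OF Gr.group_Gr_Pq group_Gr Gr.epsilon_hom Gr_gen_Pq_gen_relations(1) w])
  also have "\<dots> = weval (Gr P op pw e) (\<sigma> P op pw e) w"
    using w by (rule weval_cong) (simp add: Gr.epsilon_Pq_gen Gr_gen_in_carrier)
  finally show ?thesis using w x_eq by (simp add: weval_Gr_gen)
qed

end

theorem mainTheorem13:
  fixes P :: "'a set" and op :: "'a \<Rightarrow> 'a \<Rightarrow> 'a" and pw :: "int \<Rightarrow> 'a \<Rightarrow> 'a" and e :: 'a
  assumes "power_quandle P op pw e"
  shows "Gr_Pq (Gr P op pw e) \<cong> (Gr P op pw e) \<times>\<times> A_grp (Gr P op pw e)"
proof -
  interpret Gr: group "Gr P op pw e" by (rule group_Gr)
  show ?thesis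
    unfolding A_grp_def
    by (rule iso_DirProd_kernel_if_central_section[OF Gr.group_Gr_Pq group_Gr
          Gr.epsilon_hom Gr_section_hom epsilon_Gr_section Gr.kernel_epsilon_central])
qed

end
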